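(* Under the model and assumptions (A1)–(A2) (with $\theta^\ast\in\Theta$ almost surely), define the confidence set $$\Theta_{1-\alpha}=\Big\{\theta\in\Theta:\ \max_{\psi\in\Psi}\mathrm{pval}(\theta,\psi)>\alpha\Big\}.$$ Then $\Pr(\theta^\ast\in\Theta_{1-\alpha})\ge 1-\alpha$ for every $\alpha\in(0,1)$.
   Context: Data $y_i=y^{\mathrm{p}}(t_i)+\varepsilon(t_i)$, $i=1,\dots,n$, with times $T^{(n)}$, data vector $Y^{(n)}$, error vector $\varepsilon^{(n)}$. (A1): $g\,\varepsilon^{(n)}\overset{d}{=}\varepsilon^{(n)}$ given $T^{(n)}$ for all $g\in\mathbb{D}^n$, the group of $n\times n$ diagonal $\pm1$ matrices. (A2): $y^{\mathrm{p}}(t)=y^{\mathrm{p}}(t;\theta^\ast,\psi^\ast)$ where $y^{\mathrm{p}}(t;\theta,\psi)=\psi_1+\psi_2\cos(2\pi t/\theta)+\psi_3\sin(2\pi t/\theta)$, $\theta^\ast\in\Theta$ (a finite subset of $\mathbb{R}^+$), $\psi^\ast\in\Psi\subseteq\mathbb{R}^3$ convex and compact. For $(\theta_0,\psi_0)\in\Theta\times\Psi$: loss $L(\theta,\psi)=\sum_i[y_i-y^{\mathrm{p}}(t_i;\theta,\psi)]^2/\sigma_i^2$ (known $\sigma_i^2>0$), $L_{0n}=\sum_i(y_i-\bar y)^2/\sigma_i^2$, $A_n(\theta\mid Y^{(n)},T^{(n)},\psi)=(L_{0n}-L(\theta,\psi))/L_{0n}$; statistic $s_n(Y^{(n)},T^{(n)})=\max_{\theta\in\Theta}A_n(\theta\mid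 Y^{(n)},T^{(n)},\psi_0)-A_n(\theta_0\mid Y^{(n)},T^{(n)},\psi_0)$, $s_{\mathrm{obs}}$ its observed value; $Y^{(n),\mathrm{p}}_0=(y^{\mathrm{p}}(t_i;\theta_0,\psi_0))_i$; for $G\sim\mathrm{Unif}(\mathbb{D}^n)$, $Y^{(n),G}=Y^{(n),\mathrm{p}}_0+G(Y^{(n)}-Y^{(n),\mathrm{p}}_0)$; $\mathrm{pval}(\theta_0,\psi_0)=\Pr_G\{s_n(Y^{(n),G},T^{(n)})\ge s_{\mathrm{obs}}\mid Y^{(n)},T^{(n)}\}$. *)

theory Defs
  imports "HOL-Probability.Probability"
begin

definition yp :: "real \<Rightarrow> real^3 \<Rightarrow> real \<Rightarrow> real" where
  "yp \<theta> \<psi> t = \<psi>$1 + \<psi>$2 * cos (2 * pi * t / \<theta>) + \<psi>$3 * sin (2 * pi * t / \<theta>)"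

definition lossL :: "('n::finite \<Rightarrow> real) \<Rightarrow> ('n \<Rightarrow> real) \<Rightarrow> ('n \<Rightarrow> real) \<Rightarrow> real \<Rightarrow> real^3 \<Rightarrow> real" where
  "lossL sigma2 Y T \<theta> \<psi> = (\<Sum>i\<in>UNIV. (Y i - yp \<theta> \<psi> (T i))^2 / sigma2 i)"

definition ybar :: "('n::finite \<Rightarrow> real) \<Rightarrow> real" where
  "ybar Y = (\<Sum>i\<in>UNIV. Y i) / real CARD('n)"

definition L0 :: "('n::finite \<Rightarrow> real) \<Rightarrow> ('n \<Rightarrow> real) \<Rightarrow> real" where
  "L0 sigma2 Y = (\<Sum>i\<in>UNIV. (Y i - ybar Y)^2 / sigma2 i)"

definition An :: "('n::finite \<Rightarrow> real) \<Rightarrow> ('n \<Rightarrow> real) \<Rightarrow> ('n \<Rightarrow> real) \<Rightarrow> real \<Rightarrow> real^3 \<Rightarrow> real" where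
  "An sigma2 Y T \<theta> \<psi> = (L0 sigma2 Y - lossL sigma2 Y T \<theta> \<psi>) / L0 sigma2 Y"

definition stat :: "real set \<Rightarrow> ('n::finite \<Rightarrow> real) \<Rightarrow> real \<Rightarrow> real^3 \<Rightarrow> ('n \<Rightarrow> real) \<Rightarrow> ('n \<Rightarrow> real) \<Rightarrow> real" where
  "stat \<Theta> sigma2 \<theta>0 \<psi>0 Y T =
     Max ((\<lambda>\<theta>. An sigma2 Y T \<theta> \<psi>0) ` \<Theta>) - An sigma2 Y T \<theta>0 \<psi>0"

text \<open>The group D^n of diagonal sign matrices, represented by their diagonals.\<close>
definition signs :: "('n::finite \<Rightarrow> real) set" where
  "signs = {g. \<forall>i. g i = 1 \<or> g i = -1}"

definition flipY :: "real \<Rightarrow> real^3 \<Rightarrow> ('n \<Rightarrow> real) \<Rightarrow> ('n \<Rightarrow> real) \<Rightarrow> ('n \<Rightarrow> real) \<Rightarrow> ('n \<Rightarrow> real)" where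
  "flipY \<theta>0 \<psi>0 T Y g = (\<lambda>i. yp \<theta>0 \<psi>0 (T i) + g i * (Y i - yp \<theta>0 \<psi>0 (T i)))"

definition pval :: "real set \<Rightarrow> ('n::finite \<Rightarrow> real) \<Rightarrow> ('n \<Rightarrow> real) \<Rightarrow> ('n \<Rightarrow> real) \<Rightarrow> real \<Rightarrow> real^3 \<Rightarrow> real" where
  "pval \<Theta> sigma2 Y T \<theta>0 \<psi>0 =
     measure_pmf.prob (pmf_of_set signs)
       {g. stat \<Theta> sigma2 \<theta>0 \<psi>0 (flipY \<theta>0 \<psi>0 T Y g) T \<ge> stat \<Theta> sigma2 \<theta>0 \<psi>0 Y T}"

definition confset :: "real set \<Rightarrow> (real^3) set \<Rightarrow> ('n::finite \<Rightarrow> real) \<Rightarrow> real \<Rightarrow> ('n \<Rightarrow> real) \<Rightarrow> ('n \<Rightarrow> real) \<Rightarrow> real set" where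
  "confset \<Theta> \<Psi> sigma2 \<alpha> Y T =
     {\<theta> \<in> \<Theta>. Max ((\<lambda>\<psi>. pval \<Theta> sigma2 Y T \<theta> \<psi>) ` \<Psi>) > \<alpha>}"

end

theory Submission
  imports Defs
begin

text \<open>
  At the true parameters the p-value only depends on the errors through the ranks of the
  statistic among the N = 2^n sign flips of eps, and by (A1) every flip h eps is distributed
  like eps jointly with T. For a fixed error vector, at most \<alpha> N flips h have at most
  \<alpha> N flips at least as extreme as h itself; averaging over h gives
  P(pval(\<theta>*, \<psi>*) \<le> \<alpha>) \<le> \<alpha>, and pval(\<theta>*, \<psi>*) > \<alpha> puts \<theta>* into the confidence set.

  The coverage event is a union over the uncountable set \<Psi>, so it needs a measurability
  argument: the statistic is a ratio of continuous functions of (\<psi>, T, eps), so each comparison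
  entering the p-value is an F-sigma set, and projecting an F-sigma set along the compact
  \<Psi> gives an F-sigma set again.
\<close>

lemma card_low_rank_le:
  fixes f :: "'a \<Rightarrow> real"
  assumes "finite S" and "K \<ge> 0"
  shows "real (card {h\<in>S. real (card {g\<in>S. f h \<le> f g}) \<le> K}) \<le> K"
proof -
  define H where "H = {h\<in>S. real (card {g\<in>S. f h \<le> f g}) \<le> K}"
  have "finite H" using assms(1) unfolding H_def by auto
  show ?thesis
  proof (cases "H = {}")
    case True
    then show ?thesis using assms(2) unfolding H_def[symmetric] by simp
  next
    case False
    with \<open>finite H\<close> have "Min (f ` H) \<in> f ` H" by simp
    then obtain h0 where h0: "h0 \<in> H" "f h0 = Min (f ` H)" by auto
    \<comment> \<open>every h in H has f h \<ge> f h0, so H is among the at most K elements counted for h0\<close>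
    have "H \<subseteq> {g\<in>S. f h0 \<le> f g}"
      using h0 \<open>finite H\<close> unfolding H_def by auto
    then have "card H \<le> card {g\<in>S. f h0 \<le> f g}"
      using assms(1) by (intro card_mono) auto
    also have "real \<dots> \<le> K"
      using h0 unfolding H_def by auto
    finally show ?thesis unfolding H_def by simp
  qed
qed

lemma borel_fsigma:
  assumes "fsigma_in euclidean S"
  shows "S \<in> sets borel"
proof -
  obtain U where U: "countable U" "\<And>C. C \<in> U \<Longrightarrow> closed C" "\<Union>U = S"
    using assms unfolding fsigma_in_def union_of_def closed_closedin by blast
  then have "\<Union>U \<in> sets borel"
    by (intro sets.countable_Union) (auto intro: borel_closed)
  then show ?thesis using U(3) by simp
qed

lemma fsigma_in_INT:
  assumes "finite H" and "\<And>g. g \<in> H \<Longrightarrow> fsigma_in euclidean (A g)"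
  shows "fsigma_in euclidean (\<Inter>g\<in>H. A g)"
  using assms
proof (induction H rule: finite_induct)
  case empty
  show ?case using fsigma_in_topspace[of euclidean] by simp
qed (auto intro: fsigma_in_Int)

lemma fsigma_in_Collect_card_gt:
  assumes "finite S" and "\<And>g. g \<in> S \<Longrightarrow> fsigma_in euclidean {x. P g x}"
  shows "fsigma_in euclidean {x. K < real (card {g\<in>S. P g x})}"
proof -
  have "{x. K < real (card {g\<in>S. P g x})} = (\<Union>H\<in>{H. H \<subseteq> S \<and> K < real (card H)}. \<Inter>g\<in>H. {x. P g x})"
  proof (intro set_eqI iffI)
    fix x assume "x \<in> (\<Union>H\<in>{H. H \<subseteq> S \<and> K < real (card H)}. \<Inter>g\<in>H. {x. P g x})"
    then obtain H where H: "H \<subseteq> S" "K < real (card H)" "\<And>g. g \<in> H \<Longrightarrow> P g x" by blast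
    then have "card H \<le> card {g\<in>S. P g x}" using assms(1) by (intro card_mono) auto
    with H(2) show "x \<in> {x. K < real (card {g\<in>S. P g x})}" by simp
  next
    fix x assume "x \<in> {x. K < real (card {g\<in>S. P g x})}"
    then show "x \<in> (\<Union>H\<in>{H. H \<subseteq> S \<and> K < real (card H)}. \<Inter>g\<in>H. {x. P g x})"
      by (intro UN_I[of "{g\<in>S. P g x}"]) auto
  qed
  moreover have "finite {H. H \<subseteq> S \<and> K < real (card H)}" using assms(1) by simp
  ultimately show ?thesis
    using assms finite_subset
    by (auto intro!: fsigma_in_Union countable_finite fsigma_in_INT)
qed

lemma fsigma_in_compact_projection:
  fixes S :: "'a::euclidean_space set" and T :: "('a \<times> 'b::euclidean_space) set"
  assumes "compact S" and "fsigma_in euclidean T"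
  shows "fsigma_in euclidean {y. \<exists>x\<in>S. (x, y) \<in> T}"
proof -
  obtain U where U: "countable U" "\<And>C. C \<in> U \<Longrightarrow> closed C" "\<Union>U = T"
    using assms(2) unfolding fsigma_in_def union_of_def closed_closedin by blast
  then have eq: "{y. \<exists>x\<in>S. (x, y) \<in> T} = (\<Union>C\<in>U. {y. \<exists>x. x \<in> S \<and> (x, y) \<in> C})"
    by blast
  have "closed {y. \<exists>x. x \<in> S \<and> (x, y) \<in> C}" if "C \<in> U" for C
    using closed_compact_projection[OF assms(1) U(2)[OF that]] .
  then show ?thesis
    unfolding eq using U(1)
    by (intro fsigma_in_Union) (auto intro: closed_imp_fsigma_in simp: closed_closedin[symmetric])
qed

lemma fsigma_in_Collect_divide_le:
  fixes a b p q :: "'a::metric_space \<Rightarrow> real"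
  assumes "continuous_on UNIV a" "continuous_on UNIV b" "continuous_on UNIV p" "continuous_on UNIV q"
    and "\<And>x. a x \<ge> 0" "\<And>x. p x \<ge> 0" "\<And>x. q x \<ge> 0"
  shows "fsigma_in euclidean {x. b x / q x \<le> a x / p x}"
proof -
  have "{x. b x / q x \<le> a x / p x} = {x. q x = 0} \<union> {x. p x = 0 \<and> b x \<le> 0}
      \<union> ({x. 0 < p x} \<inter> {x. b x * p x \<le> a x * q x})"
  proof (intro set_eqI)
    fix x
    \<comment> \<open>with x / 0 = 0, split into the cases q = 0, p = 0 < q and p, q > 0\<close>
    show "x \<in> {x. b x / q x \<le> a x / p x} \<longleftrightarrow> x \<in> {x. q x = 0} \<union> {x. p x = 0 \<and> b x \<le> 0}
      \<union> ({x. 0 < p x} \<inter> {x. b x * p x \<le> a x * q x})"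
      using assms(5-7)[of x] by (cases "q x = 0"; cases "p x = 0")
        (auto simp: divide_le_0_iff field_simps less_le)
  qed
  moreover have "closed {x. q x = 0}" "closed {x. p x = 0 \<and> b x \<le> 0}"
      "closed {x. b x * p x \<le> a x * q x}" "open {x. 0 < p x}"
    using assms(1-4) by (auto intro!: closed_Collect_eq closed_Collect_conj closed_Collect_le
        open_Collect_less continuous_intros)
  ultimately show ?thesis
    by (simp add: fsigma_in_Un fsigma_in_Int closed_imp_fsigma_in closed_closedin[symmetric]
        open_imp_fsigma_in[OF metrizable_space_euclidean] open_openin[symmetric])
qed

lemma continuous_on_Max_image:
  fixes f :: "'b \<Rightarrow> 'a::topological_space \<Rightarrow> 'c::linorder_topology"
  assumes "finite A" and "A \<noteq> {}" and "\<And>a. a \<in> A \<Longrightarrow> continuous_on S (f a)"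
  shows "continuous_on S (\<lambda>x. Max ((\<lambda>a. f a x) ` A))"
  using assms
proof (induction A rule: finite_ne_induct)
  case (insert a A)
  then have "continuous_on S (\<lambda>x. max (f a x) (Max ((\<lambda>a. f a x) ` A)))"
    by (intro continuous_on_max) auto
  with insert show ?case by simp
qed simp

lemma borel_measurable_vec_lambda:
  assumes "\<And>i. (\<lambda>\<omega>. f \<omega> i) \<in> borel_measurable M"
  shows "(\<lambda>\<omega>. (\<chi> i. f \<omega> i) :: real^'n::finite) \<in> borel_measurable M"
proof (rule borel_measurable_euclidean_space[THEN iffD2], intro ballI)
  fix b :: "real^'n" assume "b \<in> Basis"
  then obtain j where "b = axis j 1" unfolding Basis_vec_def by auto
  then show "(\<lambda>\<omega>. (\<chi> i. f \<omega> i) \<bullet> b) \<in> borel_measurable M"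
    using assms by (simp add: inner_axis)
qed

lemma signs_eq_PiE: "(signs :: ('n::finite \<Rightarrow> real) set) = PiE UNIV (\<lambda>_. {1, -1})"
  unfolding signs_def PiE_def Pi_def extensional_def by auto

lemma finite_signs: "finite (signs :: ('n::finite \<Rightarrow> real) set)"
  unfolding signs_eq_PiE by (intro finite_PiE) auto

lemma signs_nonempty: "(signs :: ('n::finite \<Rightarrow> real) set) \<noteq> {}"
proof -
  have "(\<lambda>_. 1) \<in> (signs :: ('n \<Rightarrow> real) set)" by (simp add: signs_def)
  then show ?thesis by blast
qed

lemma card_signs_pos: "card (signs :: ('n::finite \<Rightarrow> real) set) > 0"
  using finite_signs signs_nonempty by (simp add: card_gt_0_iff)

lemma signs_mult_self:
  assumes "g \<in> signs"
  shows "g i * g i = 1"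
proof -
  have "g i = 1 \<or> g i = -1" using assms by (simp add: signs_def)
  then show ?thesis by auto
qed

lemma signs_mult:
  assumes "g \<in> signs" and "h \<in> signs"
  shows "(\<lambda>i. g i * h i) \<in> signs"
proof -
  have "(g i = 1 \<or> g i = -1) \<and> (h i = 1 \<or> h i = -1)" for i
    using assms by (simp add: signs_def)
  then have "g i * h i = 1 \<or> g i * h i = -1" for i
    by (metis mult_1_left mult_minus1 minus_minus)
  then show ?thesis unfolding signs_def by simp
qed

lemma card_signs_mult_right:
  assumes "h \<in> signs"
  shows "card {g\<in>signs. P (\<lambda>i. g i * h i)} = card {g\<in>(signs :: ('n::finite \<Rightarrow> real) set). P g}"
proof (rule bij_betw_same_card)
  let ?f = "\<lambda>g i. g i * h i"
  have inv: "?f (?f g) = g" for g :: "'n \<Rightarrow> real"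
    using signs_mult_self[OF assms] by (simp add: mult.assoc)
  show "bij_betw ?f {g\<in>signs. P (?f g)} {g\<in>signs. P g}"
    by (rule bij_betw_byWitness[where f' = ?f]) (use inv signs_mult[OF _ assms] in auto)
qed

lemma card_sign_flip_rank_le:
  fixes St :: "('n::finite \<Rightarrow> real) \<Rightarrow> real"
  assumes "K \<ge> 0"
  shows "real (card {h\<in>signs. real (card {g\<in>signs.
    St (\<lambda>i. h i * e i) \<le> St (\<lambda>i. g i * (h i * e i))}) \<le> K}) \<le> K"
proof -
  have "card {g\<in>signs. St (\<lambda>i. h i * e i) \<le> St (\<lambda>i. g i * (h i * e i))}
      = card {g\<in>signs. St (\<lambda>i. h i * e i) \<le> St (\<lambda>i. g i * e i)}" if "h \<in> signs" for h
    using card_signs_mult_right[OF that, of "\<lambda>g. St (\<lambda>i. h i * e i) \<le> St (\<lambda>i. g i * e i)"]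
    by (simp add: mult.assoc)
  then have "{h\<in>signs. real (card {g\<in>signs. St (\<lambda>i. h i * e i) \<le> St (\<lambda>i. g i * (h i * e i))}) \<le> K}
      = {h\<in>signs. real (card {g\<in>signs. St (\<lambda>i. h i * e i) \<le> St (\<lambda>i. g i * e i)}) \<le> K}"
    by (intro Collect_cong) auto
  then show ?thesis
    using card_low_rank_le[OF finite_signs assms, of "\<lambda>h. St (\<lambda>i. h i * e i)"] by simp
qed

lemma pval_eq_card:
  fixes sigma2 :: "'n::finite \<Rightarrow> real"
  shows "pval \<Theta> sigma2 Y T \<theta>0 \<psi>0 =
     real (card {g\<in>signs. stat \<Theta> sigma2 \<theta>0 \<psi>0 Y T \<le> stat \<Theta> sigma2 \<theta>0 \<psi>0 (flipY \<theta>0 \<psi>0 T Y g) T})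
     / real (card (signs :: ('n::finite \<Rightarrow> real) set))"
  unfolding pval_def measure_pmf_of_set[OF signs_nonempty finite_signs] Int_def by simp

lemma pval_gt_iff_card:
  fixes sigma2 :: "'n::finite \<Rightarrow> real"
  shows "\<alpha> < pval \<Theta> sigma2 Y T \<theta>0 \<psi>0 \<longleftrightarrow>
    \<alpha> * real (card (signs :: ('n \<Rightarrow> real) set)) < real (card {g\<in>signs.
      stat \<Theta> sigma2 \<theta>0 \<psi>0 Y T \<le> stat \<Theta> sigma2 \<theta>0 \<psi>0 (flipY \<theta>0 \<psi>0 T Y g) T})"
  unfolding pval_eq_card using card_signs_pos[where 'n='n] by (simp add: less_divide_eq)

lemma pval_in_range:
  fixes sigma2 :: "'n::finite \<Rightarrow> real"
  shows "pval \<Theta> sigma2 Y T \<theta>0 \<psi>0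
     \<in> (\<lambda>k. real k / real (card (signs :: ('n::finite \<Rightarrow> real) set))) ` {..card (signs :: ('n \<Rightarrow> real) set)}"
  unfolding pval_eq_card by (rule image_eqI[OF refl]) (auto intro: card_mono finite_signs)

lemma mem_confset_iff:
  assumes "\<Psi> \<noteq> {}"
  shows "\<theta> \<in> confset \<Theta> \<Psi> sigma2 \<alpha> Y T \<longleftrightarrow>
    \<theta> \<in> \<Theta> \<and> (\<exists>\<psi>\<in>\<Psi>. \<alpha> < pval \<Theta> (sigma2 :: 'n::finite \<Rightarrow> real) Y T \<theta> \<psi>)"
proof -
  have "finite ((\<lambda>\<psi>. pval \<Theta> sigma2 Y T \<theta> \<psi>) ` \<Psi>)"
    by (rule finite_subset[OF _ finite_imageI[OF finite_atMost]]) (use pval_in_range in blast)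
  then show ?thesis
    unfolding confset_def using assms by (simp add: Max_gr_iff)
qed

lemma flipY_model:
  "flipY \<theta> \<psi> t (\<lambda>i. yp \<theta> \<psi> (t i) + e i) g = (\<lambda>i. yp \<theta> \<psi> (t i) + g i * e i)"
  unfolding flipY_def by simp

lemma L0_nonneg:
  assumes "\<And>i. sigma2 i > 0"
  shows "L0 sigma2 Y \<ge> 0"
  unfolding L0_def using assms by (intro sum_nonneg divide_nonneg_pos) auto

\<comment> \<open>This also holds when L0 = 0, as both sides are then 0.\<close>
lemma stat_eq_Max_divide_L0:
  assumes "finite \<Theta>" and "\<Theta> \<noteq> {}" and "\<And>i. sigma2 i > 0"
  shows "stat \<Theta> sigma2 \<theta>0 \<psi> Y t =
    Max ((\<lambda>\<theta>. lossL sigma2 Y t \<theta>0 \<psi> - lossL sigma2 Y t \<theta> \<psi>) ` \<Theta>) / L0 sigma2 Y"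
proof -
  define c where "c = L0 sigma2 Y"
  define A where "A \<theta> = (c - lossL sigma2 Y t \<theta> \<psi>) / c" for \<theta>
  have "c \<ge> 0" unfolding c_def by (rule L0_nonneg[OF assms(3)])
  then have "mono (\<lambda>v. v / c)" by (intro monoI) (simp add: divide_right_mono)
  then have "Max ((\<lambda>\<theta>. lossL sigma2 Y t \<theta>0 \<psi> - lossL sigma2 Y t \<theta> \<psi>) ` \<Theta>) / c
      = Max ((\<lambda>\<theta>. (lossL sigma2 Y t \<theta>0 \<psi> - lossL sigma2 Y t \<theta> \<psi>) / c) ` \<Theta>)"
    using mono_Max_commute[OF _ finite_imageI[OF assms(1)]] assms(2) by (simp add: image_image)
  also have "\<dots> = Max ((\<lambda>\<theta>. A \<theta> - A \<theta>0) ` \<Theta>)"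
    unfolding A_def by (simp add: diff_divide_distrib)
  also have "\<dots> = Max (A ` \<Theta>) - A \<theta>0"
    using mono_Max_commute[of "\<lambda>v. v - A \<theta>0" "A ` \<Theta>"] assms(1,2)
    by (simp add: mono_def image_image)
  finally show ?thesis
    unfolding stat_def An_def A_def c_def by simp
qed

lemma continuous_on_L0:
  fixes Y :: "'a::topological_space \<Rightarrow> ('n::finite \<Rightarrow> real)"
  assumes "\<And>i. continuous_on S (\<lambda>x. Y x i)"
  shows "continuous_on S (\<lambda>x. L0 sigma2 (Y x))"
  unfolding L0_def ybar_def divide_inverse by (intro continuous_intros assms)

lemma continuous_on_lossL:
  fixes Y t :: "'a::t2_space \<Rightarrow> ('n::finite \<Rightarrow> real)" and \<psi> :: "'a \<Rightarrow> real^3"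
  assumes "\<And>i. continuous_on S (\<lambda>x. Y x i)" and "\<And>i. continuous_on S (\<lambda>x. t x i)"
    and "continuous_on S \<psi>"
  shows "continuous_on S (\<lambda>x. lossL sigma2 (Y x) (t x) \<theta> (\<psi> x))"
  unfolding lossL_def yp_def divide_inverse by (intro continuous_intros assms)

lemma fsigma_in_Collect_stat_le:
  fixes \<psi> :: "'a::metric_space \<Rightarrow> real^3" and t Y W :: "'a \<Rightarrow> ('n::finite \<Rightarrow> real)"
  assumes "finite \<Theta>" and "\<theta>0 \<in> \<Theta>" and "\<And>i. sigma2 i > 0"
    and "continuous_on UNIV \<psi>" and "\<And>i. continuous_on UNIV (\<lambda>x. t x i)"
    and "\<And>i. continuous_on UNIV (\<lambda>x. Y x i)" and "\<And>i. continuous_on UNIV (\<lambda>x. W x i)"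
  shows "fsigma_in euclidean
    {x. stat \<Theta> sigma2 \<theta>0 (\<psi> x) (Y x) (t x) \<le> stat \<Theta> sigma2 \<theta>0 (\<psi> x) (W x) (t x)}"
proof -
  define gap where "gap V x =
      Max ((\<lambda>\<theta>. lossL sigma2 (V x) (t x) \<theta>0 (\<psi> x) - lossL sigma2 (V x) (t x) \<theta> (\<psi> x)) ` \<Theta>)"
    for V :: "'a \<Rightarrow> 'n \<Rightarrow> real" and x
  have gap_nonneg: "gap V x \<ge> 0" for V x
    unfolding gap_def using assms(1,2) by (intro Max_ge_iff[THEN iffD2]) auto
  have gap_cont: "continuous_on UNIV (gap V)" if "\<And>i. continuous_on UNIV (\<lambda>x. V x i)" for V
    unfolding gap_def using assms(1,2)
    by (intro continuous_on_Max_image continuous_intros continuous_on_lossL that assms(4,5)) auto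
  have "stat \<Theta> sigma2 \<theta>0 (\<psi> x) (V x) (t x) = gap V x / L0 sigma2 (V x)" for V x
    unfolding gap_def using assms(1-3) by (intro stat_eq_Max_divide_L0) auto
  then show ?thesis
    using assms(3,6,7)
    by (simp only:) (intro fsigma_in_Collect_divide_le gap_cont continuous_on_L0 gap_nonneg L0_nonneg)
qed

\<comment> \<open>Times and errors are vectors in real^'n here, because projections along compact sets are
  available for euclidean spaces.\<close>
lemma sets_borel_exists_pval_gt:
  fixes sigma2 :: "'n::finite \<Rightarrow> real" and \<Psi> :: "(real^3) set"
  assumes "finite \<Theta>" and "\<theta>0 \<in> \<Theta>" and "\<And>i. sigma2 i > 0" and "compact \<Psi>"
  shows "{z :: (real^'n) \<times> (real^'n). \<exists>\<psi>\<in>\<Psi>.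
    \<alpha> < pval \<Theta> sigma2 (\<lambda>i. yp \<theta>1 \<psi>1 (fst z $ i) + snd z $ i) (\<lambda>i. fst z $ i) \<theta>0 \<psi>} \<in> sets borel"
proof -
  define t where "t x = (\<lambda>i. fst (snd x) $ i)" for x :: "(real^3) \<times> (real^'n) \<times> (real^'n)"
  define Y where "Y x = (\<lambda>i. yp \<theta>1 \<psi>1 (t x i) + snd (snd x) $ i)" for x
  define D where "D = {x. \<alpha> < pval \<Theta> sigma2 (Y x) (t x) \<theta>0 (fst x)}"
  have "continuous_on UNIV (\<lambda>x. Y x i)" "continuous_on UNIV (\<lambda>x. t x i)" for i
    unfolding Y_def t_def yp_def divide_inverse by (intro continuous_intros)+
  then have "fsigma_in euclidean D"
    unfolding D_def pval_gt_iff_card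
    by (intro fsigma_in_Collect_card_gt finite_signs fsigma_in_Collect_stat_le assms(1-3))
      (auto simp: flipY_def yp_def divide_inverse intro!: continuous_intros)
  then have "fsigma_in euclidean {z. \<exists>\<psi>\<in>\<Psi>. (\<psi>, z) \<in> D}"
    by (rule fsigma_in_compact_projection[OF assms(4)])
  then show ?thesis
    unfolding D_def Y_def t_def by (auto dest: borel_fsigma)
qed

lemma sets_exists_pval_gt:
  fixes T eps :: "'w \<Rightarrow> ('n::finite \<Rightarrow> real)" and sigma2 :: "'n \<Rightarrow> real"
  assumes "T \<in> M \<rightarrow>\<^sub>M PiM UNIV (\<lambda>_. borel)" and "eps \<in> M \<rightarrow>\<^sub>M PiM UNIV (\<lambda>_. borel)"
    and "finite \<Theta>" and "\<theta>0 \<in> \<Theta>" and "\<And>i. sigma2 i > 0" and "compact \<Psi>"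
  shows "{\<omega>\<in>space M. \<exists>\<psi>\<in>\<Psi>.
    \<alpha> < pval \<Theta> sigma2 (\<lambda>i. yp \<theta>1 \<psi>1 (T \<omega> i) + eps \<omega> i) (T \<omega>) \<theta>0 \<psi>} \<in> sets M"
proof -
  have "(\<lambda>\<omega>. ((\<chi> i. T \<omega> i) :: real^'n, (\<chi> i. eps \<omega> i) :: real^'n)) \<in> borel_measurable M"
    unfolding borel_prod[symmetric] using assms(1,2)
    by (intro measurable_Pair borel_measurable_vec_lambda)
      (auto intro: measurable_compose[OF _ measurable_component_singleton])
  from measurable_sets[OF this sets_borel_exists_pval_gt[where ?sigma2.0 = sigma2, OF assms(3-6)]]
  show ?thesis
    by (simp add: vimage_def Int_def conj_commute vec_lambda_inverse)
qed

lemma prob_sign_flip_rank_le: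
  fixes M :: "'w measure" and T eps :: "'w \<Rightarrow> ('n::finite \<Rightarrow> real)"
    and St :: "('n \<Rightarrow> real) \<Rightarrow> ('n \<Rightarrow> real) \<Rightarrow> real"
  defines "PP \<equiv> PiM UNIV (\<lambda>_::'n. borel :: real measure) \<Otimes>\<^sub>M PiM UNIV (\<lambda>_::'n. borel :: real measure)"
    and "rk t e \<equiv> real (card {g\<in>signs. St t e \<le> St t (\<lambda>i. g i * e i)})"
  assumes "prob_space M"
    and "T \<in> M \<rightarrow>\<^sub>M PiM UNIV (\<lambda>_. borel)" and "eps \<in> M \<rightarrow>\<^sub>M PiM UNIV (\<lambda>_. borel)"
    and A1: "\<And>g. g \<in> signs \<Longrightarrow>
      distr M PP (\<lambda>\<omega>. (T \<omega>, \<lambda>i. g i * eps \<omega> i)) = distr M PP (\<lambda>\<omega>. (T \<omega>, eps \<omega>))"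
    and K_nonneg: "K \<ge> 0"
    and E_sets: "{p\<in>space PP. rk (fst p) (snd p) \<le> K} \<in> sets PP"
  shows "measure M {\<omega>\<in>space M. rk (T \<omega>) (eps \<omega>) \<le> K} \<le> K / real (card (signs :: ('n \<Rightarrow> real) set))"
proof -
  interpret prob_space M by fact
  define E where "E = {p\<in>space PP. rk (fst p) (snd p) \<le> K}"
  have space_PP: "space PP = UNIV"
    by (simp add: PP_def space_pair_measure space_PiM)
  define flip where "flip h = (\<lambda>\<omega>. (T \<omega>, \<lambda>i. h i * eps \<omega> i))" for h :: "'n \<Rightarrow> real"
  define Bad where "Bad h = flip h -` E \<inter> space M" for h
  have "(\<lambda>\<omega>. eps \<omega> i) \<in> borel_measurable M" for i
    using assms(5) by (rule measurable_compose[OF _ measurable_component_singleton]) simp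
  then have "(\<lambda>\<omega> i. h i * eps \<omega> i) \<in> M \<rightarrow>\<^sub>M PiM UNIV (\<lambda>_. borel)" for h :: "'n \<Rightarrow> real"
    by (intro measurable_PiM_single') auto
  then have flip_meas: "flip h \<in> M \<rightarrow>\<^sub>M PP" for h
    unfolding flip_def PP_def using assms(4) by measurable
  then have Bad_sets: "Bad h \<in> sets M" for h
    unfolding Bad_def E_def using E_sets by (rule measurable_sets)
  \<comment> \<open>by (A1) all events Bad h are equally likely, and pointwise at most K of them occur\<close>
  have Bad_eq: "measure M (Bad h) = measure M (Bad (\<lambda>_. 1))" if "h \<in> signs" for h
  proof -
    have "measure M (Bad h) = measure (distr M PP (flip h)) E"
      unfolding Bad_def E_def by (rule measure_distr[OF flip_meas E_sets, symmetric])
    also have "\<dots> = measure (distr M PP (flip (\<lambda>_. 1))) E"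
      using A1[OF that] by (simp add: flip_def)
    also have "\<dots> = measure M (Bad (\<lambda>_. 1))"
      unfolding Bad_def E_def by (rule measure_distr[OF flip_meas E_sets])
    finally show ?thesis .
  qed
  have Bad_count: "(\<Sum>h\<in>signs. indicator (Bad h) \<omega>) \<le> K" if "\<omega> \<in> space M" for \<omega>
  proof -
    have "(\<Sum>h\<in>signs. indicator (Bad h) \<omega>) = real (card {h\<in>signs. \<omega> \<in> Bad h})"
      by (simp add: indicator_def Int_def finite_signs)
    also have "\<dots> \<le> K"
      using that card_sign_flip_rank_le[OF K_nonneg, of "St (T \<omega>)" "eps \<omega>"]
      by (simp add: Bad_def E_def flip_def rk_def space_PP)
    finally show ?thesis .
  qed
  have Bad_integrable: "integrable M (indicator (Bad h) :: 'w \<Rightarrow> real)" for h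
    using Bad_sets by (simp add: less_top[symmetric])
  have "real (card (signs :: ('n \<Rightarrow> real) set)) * measure M (Bad (\<lambda>_. 1)) = (\<Sum>h\<in>signs. measure M (Bad h))"
    using Bad_eq by simp
  also have "\<dots> = integral\<^sup>L M (\<lambda>\<omega>. \<Sum>h\<in>signs. indicator (Bad h) \<omega>)"
    using Bad_sets Bad_integrable
    by (subst Bochner_Integration.integral_sum) (auto simp: Int_absorb2 sets.sets_into_space)
  also have "\<dots> \<le> integral\<^sup>L M (\<lambda>_. K)"
    by (intro integral_mono Bad_count Bochner_Integration.integrable_sum Bad_integrable) auto
  also have "\<dots> = K"
    by (simp add: prob_space)
  finally show ?thesis
    using card_signs_pos[where 'n='n]
    by (simp add: Bad_def E_def flip_def space_PP field_simps Int_def conj_commute)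
qed

lemma prob_pval_le:
  fixes M :: "'w measure" and T eps :: "'w \<Rightarrow> ('n::finite \<Rightarrow> real)" and sigma2 :: "'n \<Rightarrow> real"
  assumes "prob_space M"
    and T_meas: "T \<in> M \<rightarrow>\<^sub>M PiM UNIV (\<lambda>_. borel)" and eps_meas: "eps \<in> M \<rightarrow>\<^sub>M PiM UNIV (\<lambda>_. borel)"
    and A1: "\<And>g. g \<in> signs \<Longrightarrow>
       distr M (PiM UNIV (\<lambda>_::'n. borel) \<Otimes>\<^sub>M PiM UNIV (\<lambda>_::'n. borel)) (\<lambda>\<omega>. (T \<omega>, \<lambda>i. g i * eps \<omega> i))
     = distr M (PiM UNIV (\<lambda>_::'n. borel) \<Otimes>\<^sub>M PiM UNIV (\<lambda>_::'n. borel)) (\<lambda>\<omega>. (T \<omega>, eps \<omega>))"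
    and "finite \<Theta>" and "\<theta>s \<in> \<Theta>" and "\<And>i. sigma2 i > 0" and "\<alpha> \<ge> 0"
  shows "measure M {\<omega>\<in>space M. pval \<Theta> sigma2 (\<lambda>i. yp \<theta>s \<psi>s (T \<omega> i) + eps \<omega> i) (T \<omega>) \<theta>s \<psi>s \<le> \<alpha>} \<le> \<alpha>"
proof -
  define PP where "PP = PiM UNIV (\<lambda>_::'n. borel :: real measure) \<Otimes>\<^sub>M PiM UNIV (\<lambda>_::'n. borel :: real measure)"
  define St where "St t e = stat \<Theta> sigma2 \<theta>s \<psi>s (\<lambda>i. yp \<theta>s \<psi>s (t i) + e i) t" for t e :: "'n \<Rightarrow> real"
  define N where "N = real (card (signs :: ('n \<Rightarrow> real) set))"
  have pval_le_iff: "pval \<Theta> sigma2 (\<lambda>i. yp \<theta>s \<psi>s (t i) + e i) t \<theta>s \<psi>s \<le> \<alpha> \<longleftrightarrow>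
      real (card {g\<in>signs. St t e \<le> St t (\<lambda>i. g i * e i)}) \<le> \<alpha> * N" for t e
    unfolding St_def N_def by (simp add: not_less[symmetric] pval_gt_iff_card flipY_model)
  have "{p\<in>space PP. \<exists>\<psi>\<in>{\<psi>s}.
      \<alpha> < pval \<Theta> sigma2 (\<lambda>i. yp \<theta>s \<psi>s (fst p i) + snd p i) (fst p) \<theta>s \<psi>} \<in> sets PP"
    unfolding PP_def by (intro sets_exists_pval_gt measurable_fst measurable_snd assms(5-7) compact_sing)
  from sets.sets_Collect_neg[OF this]
  have "{p\<in>space PP. real (card {g\<in>signs. St (fst p) (snd p) \<le> St (fst p) (\<lambda>i. g i * snd p i)}) \<le> \<alpha> * N}
      \<in> sets PP"
    by (simp add: not_less pval_le_iff)
  from prob_sign_flip_rank_le[OF assms(1) T_meas eps_meas A1, of "\<alpha> * N" St, folded PP_def, OF _ _ this]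
  show ?thesis
    using card_signs_pos[where 'n='n] \<open>\<alpha> \<ge> 0\<close> by (simp add: pval_le_iff N_def)
qed

theorem theorem2:
  fixes M :: "'w measure"
    and T eps :: "'w \<Rightarrow> ('n::finite \<Rightarrow> real)"
    and \<Theta> :: "real set" and \<Psi> :: "(real^3) set"
    and \<theta>s :: real and \<psi>s :: "real^3"
    and sigma2 :: "'n \<Rightarrow> real" and \<alpha> :: real
  assumes "prob_space M"
    and "T \<in> M \<rightarrow>\<^sub>M PiM UNIV (\<lambda>_. borel)"
    and "eps \<in> M \<rightarrow>\<^sub>M PiM UNIV (\<lambda>_. borel)"
    and A1: "\<And>g. g \<in> signs \<Longrightarrow>
       distr M (PiM UNIV (\<lambda>_::'n. borel) \<Otimes>\<^sub>M PiM UNIV (\<lambda>_::'n. borel)) (\<lambda>\<omega>. (T \<omega>, \<lambda>i. g i * eps \<omega> i))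
     = distr M (PiM UNIV (\<lambda>_::'n. borel) \<Otimes>\<^sub>M PiM UNIV (\<lambda>_::'n. borel)) (\<lambda>\<omega>. (T \<omega>, eps \<omega>))"
    and "finite \<Theta>" and "\<Theta> \<subseteq> {0<..}" and "\<theta>s \<in> \<Theta>"
    and "convex \<Psi>" and "compact \<Psi>" and "\<psi>s \<in> \<Psi>"
    and "\<And>i. sigma2 i > 0"
    and "0 < \<alpha>" and "\<alpha> < 1"
  shows "measure M {\<omega> \<in> space M.
            \<theta>s \<in> confset \<Theta> \<Psi> sigma2 \<alpha> (\<lambda>i. yp \<theta>s \<psi>s (T \<omega> i) + eps \<omega> i) (T \<omega>)}
         \<ge> 1 - \<alpha>"
proof -
  interpret prob_space M by fact
  have "\<Psi> \<noteq> {}" using \<open>\<psi>s \<in> \<Psi>\<close> by blast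
  let ?Y = "\<lambda>\<omega> i. yp \<theta>s \<psi>s (T \<omega> i) + eps \<omega> i"
  define Good where "Good = {\<omega>\<in>space M. \<exists>\<psi>\<in>{\<psi>s}. \<alpha> < pval \<Theta> sigma2 (?Y \<omega>) (T \<omega>) \<theta>s \<psi>}"
  define Conf where "Conf = {\<omega>\<in>space M. \<exists>\<psi>\<in>\<Psi>. \<alpha> < pval \<Theta> sigma2 (?Y \<omega>) (T \<omega>) \<theta>s \<psi>}"
  have Good_sets: "Good \<in> sets M" and Conf_sets: "Conf \<in> sets M"
    unfolding Good_def Conf_def
    by (rule sets_exists_pval_gt; simp add: assms(2,3,5,7,9,11))+
  have "measure M {\<omega>\<in>space M. pval \<Theta> sigma2 (?Y \<omega>) (T \<omega>) \<theta>s \<psi>s \<le> \<alpha>} \<le> \<alpha>"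
    by (rule prob_pval_le[OF assms(1-4)]) (use assms(5-13) in auto)
  moreover have "space M - Good = {\<omega>\<in>space M. pval \<Theta> sigma2 (?Y \<omega>) (T \<omega>) \<theta>s \<psi>s \<le> \<alpha>}"
    by (auto simp: Good_def)
  ultimately have "measure M (space M - Good) \<le> \<alpha>"
    by simp
  then have "1 - \<alpha> \<le> measure M Good"
    using prob_compl[OF Good_sets] by simp
  also have "\<dots> \<le> measure M Conf"
    using \<open>\<psi>s \<in> \<Psi>\<close> by (intro finite_measure_mono Conf_sets) (auto simp: Good_def Conf_def)
  also have "Conf = {\<omega>\<in>space M. \<theta>s \<in> confset \<Theta> \<Psi> sigma2 \<alpha> (?Y \<omega>) (T \<omega>)}"
    using \<open>\<theta>s \<in> \<Theta>\<close> by (auto simp: Conf_def mem_confset_iff[OF \<open>\<Psi> \<noteq> {}\<close>])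
  finally show ?thesis .
qed

end
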